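(* Let $(X,S)$ be the periodic Tri-tris transformation semigroup on the $3\times 4$ board (width $3$, height $4$) with piece set $P=\{\mathrm{RS},\mathrm{LUS},\mathrm{RUS},\mathrm{V}\}$. There is a $5$-element set $Z\subseteq X$ of game states, containing the empty board $e$, and there are elements $g_1,g_2\in S$ such that $Z\cdot g_1=Z$ and $Z\cdot g_2=Z$. The restriction of $g_1$ to $Z$ is a $5$-cycle. The restriction of $g_2$ to $Z$ is a product of a disjoint $3$-cycle (containing $e$) and a transposition. Consequently, the permutations of $Z$ induced by elements of $S$ that map $Z$ onto itself form the full symmetric group $S_5$ on $Z$. In particular, this group contains the alternating group $A_5$, a finite simple nonabelian group.
   Context: Board: a grid of $n=3$ columns, indexed $0,1,2$, and $k=4$ rows. A game state is a subset of filled cells of this grid. Pieces are sets of connected cells. - $\mathrm{V}$ is the vertical straight triomino: three cells stacked in one column. - The other pieces are orientations of the L-shaped triomino, i.e. a $2\times 2$ square with one cell removed. - $\mathrm{RS}$ has two cells in its bottom row and one cell above the right one. - $\mathrm{LUS}$ has two cells in its top row and one cell below the left one. - $\mathrm{RUS}$ has two cells in its top row and one cell below the right one. - (The fourth orientation, $\mathrm{LS}$, has one cell above the left bottom cell; it is not used here.) Basic events: a basic event is a pair $\sigma=(p,\xi)$ with $p\in P$ and $\xi$ a column index such that the piece fits horizontally when its leftmost cells are placed in column $\xi$. The state $x\cdot\sigma$ is obtained as follows. 1. Drop $p$ vertically, without rotation or sliding, with its leftmost cells in column $\xi$, from above the board until it rests on the floor or on filled cells. 2. Repeatedly remove any completely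 filled row, moving all cells above it down one row. 3. If the piece cannot be placed entirely within the $k$ rows, the result is the game-over outcome. In the periodic variant, the game-over outcome is replaced by the empty board $e$, so $x\cdot\sigma=e$. $X$ is the set of states reachable from $e$ by finite sequences of basic events. $S$ is the transformation semigroup on $X$ generated by the basic events, with product $\sigma_1\sigma_2$ meaning apply $\sigma_1$ first and then $\sigma_2$. *)

theory Defs
  imports "HOL-Combinatorics.Permutations"
begin

text \<open>Tri-tris on a board with n columns (0..n-1) and k rows (0..k-1, row 0 is the
  bottom).  A cell is a pair (column, row); a game state is a set of filled cells.\<close>

type_synonym cell = "nat \<times> nat"
type_synonym state = "cell set"

datatype piece = RS | LUS | RUS | LS | V

text \<open>Cells of each piece, as offsets (dx, dy) from its bottom-left corner
  (dx = column offset, dy = row offset upwards).\<close>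
fun piece_cells :: "piece \<Rightarrow> cell set" where
  "piece_cells V   = {(0,0), (0,1), (0,2)}"
| "piece_cells RS  = {(0,0), (1,0), (1,1)}"
| "piece_cells LS  = {(0,0), (1,0), (0,1)}"
| "piece_cells LUS = {(0,1), (1,1), (0,0)}"
| "piece_cells RUS = {(0,1), (1,1), (1,0)}"

definition fits :: "nat \<Rightarrow> piece \<Rightarrow> nat \<Rightarrow> bool" where
  "fits n p xi \<longleftrightarrow> (\<forall>(dx,dy)\<in>piece_cells p. xi + dx < n)"

definition placed_at :: "piece \<Rightarrow> nat \<Rightarrow> nat \<Rightarrow> state" where
  "placed_at p xi h = {(xi + dx, h + dy) | dx dy. (dx, dy) \<in> piece_cells p}"

definition collides :: "state \<Rightarrow> piece \<Rightarrow> nat \<Rightarrow> nat \<Rightarrow> bool" where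
  "collides s p xi h \<longleftrightarrow> placed_at p xi h \<inter> s \<noteq> {}"

text \<open>Dropping from above: the piece passes through all heights h' >= h without
  collision and rests at the least such height h (on the floor or on filled cells).\<close>
definition land_height :: "state \<Rightarrow> piece \<Rightarrow> nat \<Rightarrow> nat" where
  "land_height s p xi = (LEAST h. \<forall>h'\<ge>h. \<not> collides s p xi h')"

definition full_row :: "nat \<Rightarrow> state \<Rightarrow> nat \<Rightarrow> bool" where
  "full_row n s r \<longleftrightarrow> (\<forall>c<n. (c, r) \<in> s)"

definition clear_rows :: "nat \<Rightarrow> state \<Rightarrow> state" where
  "clear_rows n s = {(c, r - card {r'. r' < r \<and> full_row n s r'}) | c r.
                        (c, r) \<in> s \<and> \<not> full_row n s r}"

text \<open>Periodic variant: the game-over outcome is replaced by the empty board.\<close>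
definition act :: "nat \<Rightarrow> nat \<Rightarrow> state \<Rightarrow> piece \<times> nat \<Rightarrow> state" where
  "act n k s \<sigma> = (case \<sigma> of (p, xi) \<Rightarrow>
     (let t = clear_rows n (s \<union> placed_at p xi (land_height s p xi))
      in if (\<forall>(c, r)\<in>t. r < k) then t else {}))"

definition basic_events :: "nat \<Rightarrow> piece set \<Rightarrow> (piece \<times> nat) set" where
  "basic_events n P = {(p, xi). p \<in> P \<and> fits n p xi}"

inductive_set reachable :: "nat \<Rightarrow> nat \<Rightarrow> piece set \<Rightarrow> state set"
  for n k P where
  empty: "{} \<in> reachable n k P"
| step: "s \<in> reachable n k P \<Longrightarrow> \<sigma> \<in> basic_events n P \<Longrightarrow> act n k s \<sigma> \<in> reachable n k P"

text \<open>The transformation semigroup generated by the basic events; the product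
  f g means "apply f first, then g", so words are applied left to right.\<close>
inductive_set tsemigroup :: "nat \<Rightarrow> nat \<Rightarrow> piece set \<Rightarrow> (state \<Rightarrow> state) set"
  for n k P where
  gen: "\<sigma> \<in> basic_events n P \<Longrightarrow> (\<lambda>s. act n k s \<sigma>) \<in> tsemigroup n k P"
| app: "f \<in> tsemigroup n k P \<Longrightarrow> \<sigma> \<in> basic_events n P \<Longrightarrow> (\<lambda>s. act n k (f s) \<sigma>) \<in> tsemigroup n k P"

abbreviation "P0 \<equiv> {RS, LUS, RUS, V}"
abbreviation "X0 \<equiv> reachable 3 4 P0"
abbreviation "S0 \<equiv> tsemigroup 3 4 P0"

definition induced :: "state set \<Rightarrow> (state \<Rightarrow> state) \<Rightarrow> state \<Rightarrow> state" where
  "induced Z g = (\<lambda>z. if z \<in> Z then g z else z)"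

end

theory Submission
  imports Defs "HOL-Combinatorics.Cycles"
begin

(* The five states z0, ..., z4 and the words g1, g2 of basic events are explicit, and their
   action is computed by evaluating an executable copy of the game, which agrees with act on
   every state inside the board. On Z, g1 is a 5-cycle and g2 is a 3-cycle times a disjoint
   transposition, so g2^3 is a transposition. Conjugating it by the powers of g1 gives the
   transpositions along a closed path through all of Z, and these generate the symmetric group.
   Since the elements of S mapping Z onto itself are closed under composition, and a
   composition-closed set of permutations of a finite set is a group, they induce all of S_5. *)

definition run :: "nat \<Rightarrow> nat \<Rightarrow> (piece \<times> nat) list \<Rightarrow> state \<Rightarrow> state" where
  "run n k w s = fold (\<lambda>\<sigma> s. act n k s \<sigma>) w s"

lemma run_in_tsemigroup:
  assumes "w \<noteq> []" "set w \<subseteq> basic_events n P"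
  shows "run n k w \<in> tsemigroup n k P"
  using assms
proof (induction w rule: rev_induct)
  case Nil
  then show ?case by simp
next
  case (snoc \<sigma> w)
  show ?case
  proof (cases "w = []")
    case True
    then have "run n k (w @ [\<sigma>]) = (\<lambda>s. act n k s \<sigma>)" by (simp add: run_def fun_eq_iff)
    with snoc.prems show ?thesis by (auto intro: tsemigroup.gen)
  next
    case False
    have "run n k (w @ [\<sigma>]) = (\<lambda>s. act n k (run n k w s) \<sigma>)" by (simp add: run_def fun_eq_iff)
    with snoc False show ?thesis by (auto intro: tsemigroup.app)
  qed
qed

lemma tsemigroup_comp:
  assumes "f \<in> tsemigroup n k P" "g \<in> tsemigroup n k P"
  shows "g \<circ> f \<in> tsemigroup n k P"
  using assms(2)
proof (induction g rule: tsemigroup.induct)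
  case (gen \<sigma>)
  with assms(1) show ?case by (auto simp: comp_def intro: tsemigroup.app)
next
  case (app g \<sigma>)
  then show ?case by (auto simp: comp_def dest: tsemigroup.app)
qed

lemma tsemigroup_reachable:
  assumes "f \<in> tsemigroup n k P" "s \<in> reachable n k P"
  shows "f s \<in> reachable n k P"
  using assms(1) by induction (auto intro: reachable.step assms(2))


fun land_height_from :: "state \<Rightarrow> piece \<Rightarrow> nat \<Rightarrow> nat \<Rightarrow> nat" where
  "land_height_from s p xi 0 = 0"
| "land_height_from s p xi (Suc h) =
     (if collides s p xi h then Suc h else land_height_from s p xi h)"

definition within_rows :: "nat \<Rightarrow> state \<Rightarrow> bool" where
  "within_rows k s \<longleftrightarrow> (\<forall>(c, r)\<in>s. r < k)"

lemma land_height_eq_land_height_from: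
  assumes "\<forall>h'\<ge>h. \<not> collides s p xi h'"
  shows "land_height s p xi = land_height_from s p xi h"
  using assms
proof (induction h)
  case 0
  then show ?case by (simp add: land_height_def Least_eq_0)
next
  case (Suc h)
  show ?case
  proof (cases "collides s p xi h")
    case True
    have "(LEAST h. \<forall>h'\<ge>h. \<not> collides s p xi h') = Suc h"
    proof (rule Least_equality)
      show "\<forall>h'\<ge>Suc h. \<not> collides s p xi h'" using Suc.prems by blast
      fix y assume "\<forall>h'\<ge>y. \<not> collides s p xi h'"
      with True show "Suc h \<le> y" by (metis not_less_eq_eq)
    qed
    with True show ?thesis by (simp add: land_height_def)
  next
    case False
    with Suc.prems have "\<forall>h'\<ge>h. \<not> collides s p xi h'"
      by (metis le_antisym not_less_eq_eq)
    with Suc.IH False show ?thesis by simp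
  qed
qed

lemma not_collides_above:
  assumes "within_rows h s" "h \<le> h'"
  shows "\<not> collides s p xi h'"
  using assms unfolding within_rows_def collides_def placed_at_def by fastforce

lemma placed_at_eq_image: "placed_at p xi h = (\<lambda>(dx, dy). (xi + dx, h + dy)) ` piece_cells p"
  unfolding placed_at_def by auto

definition clear_rows_exec :: "nat \<Rightarrow> state \<Rightarrow> state" where
  "clear_rows_exec n t =
     (let full = (\<lambda>r. \<forall>c\<in>set [0..<n]. (c, r) \<in> t)
      in (\<lambda>(c, r). (c, r - length (filter full [0..<r]))) ` Set.filter (\<lambda>(c, r). \<not> full r) t)"

definition act_exec :: "nat \<Rightarrow> nat \<Rightarrow> state \<Rightarrow> piece \<times> nat \<Rightarrow> state" where
  "act_exec n k s \<sigma> = (case \<sigma> of (p, xi) \<Rightarrow>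
     (let h = land_height_from s p xi k;
          t = clear_rows_exec n (s \<union> (\<lambda>(dx, dy). (xi + dx, h + dy)) ` piece_cells p)
      in if within_rows k t then t else {}))"

lemma clear_rows_eq_exec: "clear_rows n t = clear_rows_exec n t"
proof -
  have full: "full_row n t = (\<lambda>r. \<forall>c\<in>set [0..<n]. (c, r) \<in> t)"
    by (auto simp: fun_eq_iff full_row_def)
  have card_eq: "card {r'. r' < r \<and> full_row n t r'} = length (filter (full_row n t) [0..<r])" for r
  proof -
    have "{r'. r' < r \<and> full_row n t r'} = set (filter (full_row n t) [0..<r])" by auto
    then show ?thesis by (metis distinct_card distinct_filter distinct_upt)
  qed
  show ?thesis
    unfolding clear_rows_def clear_rows_exec_def full[symmetric] Let_def card_eq by force
qed

lemma act_eq_act_exec: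
  assumes "within_rows k s"
  shows "act n k s \<sigma> = act_exec n k s \<sigma>"
proof -
  obtain p xi where \<sigma>: "\<sigma> = (p, xi)" by force
  have "land_height s p xi = land_height_from s p xi k"
    using not_collides_above[OF assms] by (intro land_height_eq_land_height_from) blast
  then show ?thesis
    unfolding \<sigma> act_def act_exec_def clear_rows_eq_exec placed_at_eq_image
    by (simp add: within_rows_def Let_def)
qed

lemma within_rows_act: "within_rows k (act n k s \<sigma>)"
  unfolding act_def within_rows_def by (auto simp: Let_def split: prod.splits)

definition run_exec :: "nat \<Rightarrow> nat \<Rightarrow> (piece \<times> nat) list \<Rightarrow> state \<Rightarrow> state" where
  "run_exec n k w s = fold (\<lambda>\<sigma> s. act_exec n k s \<sigma>) w s"

lemma run_eq_run_exec: "within_rows k s \<Longrightarrow> run n k w s = run_exec n k w s"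
proof (induction w arbitrary: s)
  case Nil
  then show ?case by (simp add: run_def run_exec_def)
next
  case (Cons \<sigma> w)
  have "run n k (\<sigma> # w) s = run n k w (act n k s \<sigma>)" by (simp add: run_def)
  also have "\<dots> = run_exec n k w (act n k s \<sigma>)" using Cons.IH within_rows_act by blast
  also have "\<dots> = run_exec n k (\<sigma> # w) s"
    using act_eq_act_exec[OF Cons.prems] by (simp add: run_exec_def)
  finally show ?case .
qed

abbreviation induced_perms :: "state set \<Rightarrow> (state \<Rightarrow> state) set \<Rightarrow> (state \<Rightarrow> state) set" where
  "induced_perms Z T \<equiv> {induced Z g | g. g \<in> T \<and> g ` Z = Z}"

lemma induced_comp:
  assumes "g ` Z \<subseteq> Z"
  shows "induced Z (h \<circ> g) = induced Z h \<circ> induced Z g"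
  using assms unfolding induced_def by (auto simp: fun_eq_iff)

lemma induced_permutes:
  assumes "finite Z" "g ` Z = Z"
  shows "induced Z g permutes Z"
proof (rule bij_imp_permutes)
  have "bij_betw g Z Z"
    using assms by (simp add: bij_betw_def eq_card_imp_inj_on)
  then show "bij_betw (induced Z g) Z Z"
    by (rule bij_betw_cong[THEN iffD1, rotated]) (simp add: induced_def)
  show "induced Z g x = x" if "x \<notin> Z" for x
    using that by (simp add: induced_def)
qed

locale permutation_monoid =
  fixes Z :: "'a set" and M :: "('a \<Rightarrow> 'a) set"
  assumes finite_carrier: "finite Z"
    and mem_permutes: "p \<in> M \<Longrightarrow> p permutes Z"
    and comp_mem: "p \<in> M \<Longrightarrow> q \<in> M \<Longrightarrow> q \<circ> p \<in> M"
begin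

lemma funpow_mem: "p \<in> M \<Longrightarrow> 0 < n \<Longrightarrow> p ^^ n \<in> M"
proof (induction n)
  case (Suc n)
  show ?case
  proof (cases "n = 0")
    case False
    with Suc have "p ^^ n \<in> M" by simp
    with Suc.prems(1) show ?thesis by (metis comp_mem funpow.simps(2))
  qed (simp add: Suc.prems(1))
qed simp

lemma inv_mem:
  assumes "p \<in> M"
  shows "inv p \<in> M"
proof -
  have "permutation p"
    using assms finite_carrier mem_permutes permutation_permutes by blast
  then obtain n where n: "p ^^ n = id" "n > 1"
    using permutation_is_nilpotent' by blast
  then have "p ^^ n = p \<circ> p ^^ (n - 1)" "p ^^ n = p ^^ (n - 1) \<circ> p"
    by (metis Suc_diff_1 funpow.simps(2) funpow_Suc_right order.strict_trans zero_less_one)+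
  with n have "inv p = p ^^ (n - 1)"
    by (intro inv_unique_comp) simp_all
  with n assms show ?thesis
    using funpow_mem by simp
qed

lemma id_mem: "p \<in> M \<Longrightarrow> id \<in> M"
  using comp_mem[OF _ inv_mem] permutes_inv_o(2)[OF mem_permutes] by metis

lemma transpose_conj_mem:
  assumes "Transposition.transpose a b \<in> M" "p \<in> M"
  shows "Transposition.transpose (p a) (p b) \<in> M"
proof -
  have p: "p permutes Z" using assms(2) mem_permutes by blast
  have "Transposition.transpose (p a) (p b) \<circ> p = p \<circ> Transposition.transpose a b"
    using transpose_comp_eq[of p "p a" "p b"] permutes_bij[OF p]
    by (simp add: permutes_inverses(2)[OF p])
  then have "Transposition.transpose (p a) (p b) = p \<circ> Transposition.transpose a b \<circ> inv p"
    by (metis comp_assoc comp_id permutes_inv_o(1)[OF p])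
  then show ?thesis
    using assms by (simp add: comp_mem inv_mem)
qed

lemma transpose_trans_mem:
  assumes "Transposition.transpose a b \<in> M" "Transposition.transpose b c \<in> M"
    and "a \<noteq> c" "b \<noteq> c"
  shows "Transposition.transpose a c \<in> M"
  using comp_mem[OF comp_mem[OF assms(1,2)] assms(1)] transpose_comp_triple[OF assms(3,4)]
  by (simp add: comp_assoc)

lemma permutes_mem_if_transpositions:
  assumes "\<And>a b. a \<in> Z \<Longrightarrow> b \<in> Z \<Longrightarrow> a \<noteq> b \<Longrightarrow> Transposition.transpose a b \<in> M"
    and "id \<in> M" "p permutes Z"
  shows "p \<in> M"
  using assms(3) finite_carrier
proof (induction rule: permutes_induct)
  case id
  show ?case by (fact assms(2))
next
  case (swap a b p)
  then show ?case using assms(1) comp_mem by metis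
qed

text \<open>Conjugating the transposition by the powers of the cycle gives the transpositions along
  the closed path a, c, e, b, d through all five points; composing neighbouring ones gives the rest.\<close>

lemma permutes_mem_if_five_cycle_transposition:
  assumes Z: "Z = {a, b, c, d, e}" and dist: "distinct [a, b, c, d, e]"
    and \<gamma>: "\<gamma> \<in> M" "\<gamma> a = b" "\<gamma> b = c" "\<gamma> c = d" "\<gamma> d = e" "\<gamma> e = a"
    and ac: "Transposition.transpose a c \<in> M"
    and p: "p permutes Z"
  shows "p \<in> M"
proof (rule permutes_mem_if_transpositions[OF _ id_mem[OF \<gamma>(1)] p])
  note conj = transpose_conj_mem[OF _ \<gamma>(1)]
  have bd: "Transposition.transpose b d \<in> M" using conj[OF ac] \<gamma> by simp
  have ce: "Transposition.transpose c e \<in> M" using conj[OF bd] \<gamma> by simp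
  have da: "Transposition.transpose d a \<in> M" using conj[OF ce] \<gamma> by simp
  have eb: "Transposition.transpose e b \<in> M" using conj[OF da] \<gamma> by simp
  note trans = transpose_trans_mem
  have ae: "Transposition.transpose a e \<in> M" using trans[OF ac ce] dist by auto
  have ba: "Transposition.transpose b a \<in> M" using trans[OF bd da] dist by auto
  have cb: "Transposition.transpose c b \<in> M" using trans[OF ce eb] dist by auto
  have dc: "Transposition.transpose d c \<in> M" using trans[OF da ac] dist by auto
  have ed: "Transposition.transpose e d \<in> M" using trans[OF eb bd] dist by auto
  have flip: "Transposition.transpose y x \<in> M" if "Transposition.transpose x y \<in> M" for x y
    using that by (simp only: transpose_commute)
  note ts = ac bd ce da eb ae ba cb dc ed
  fix x y assume "x \<in> Z" "y \<in> Z" "x \<noteq> y"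
  with Z show "Transposition.transpose x y \<in> M"
    using ts ts[THEN flip] by auto
qed

end

lemma permutation_monoid_induced:
  assumes "finite Z" "\<And>f g. f \<in> T \<Longrightarrow> g \<in> T \<Longrightarrow> g \<circ> f \<in> T"
  shows "permutation_monoid Z (induced_perms Z T)"
proof
  show "finite Z" by (fact assms(1))
  show "p permutes Z" if "p \<in> induced_perms Z T" for p
    using that assms(1) induced_permutes by blast
  fix p q assume "p \<in> induced_perms Z T" "q \<in> induced_perms Z T"
  then obtain g h where g: "g \<in> T" "g ` Z = Z" "p = induced Z g"
    and h: "h \<in> T" "h ` Z = Z" "q = induced Z h"
    by blast
  have "h \<circ> g \<in> T" using assms(2) g(1) h(1) .
  moreover have "(h \<circ> g) ` Z = Z" using g(2) h(2) by (simp only: image_comp[symmetric])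
  moreover have "q \<circ> p = induced Z (h \<circ> g)" using g h induced_comp[of g Z h] by simp
  ultimately show "q \<circ> p \<in> induced_perms Z T" by blast
qed

definition "z0 = ({} :: state)"
definition "z1 = ({(0, 0), (0, 1), (0, 2), (2, 0), (2, 1), (2, 2)} :: state)"
definition "z2 = ({(0, 0), (0, 1), (0, 2), (0, 3), (2, 0), (2, 1)} :: state)"
definition "z3 = ({(0, 0), (2, 0), (2, 1)} :: state)"
definition "z4 = ({(0, 0), (0, 1), (2, 0)} :: state)"

definition "Z5 = {z0, z1, z2, z3, z4}"

definition g1 :: "state \<Rightarrow> state" where
  "g1 = run 3 4 [(RS, 1), (V, 0), (RS, 1), (RUS, 0), (V, 2), (V, 0)]"

definition g2 :: "state \<Rightarrow> state" where
  "g2 = run 3 4 [(RS, 1), (LUS, 1), (LUS, 0), (V, 2), (V, 0)]"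

lemmas z_defs = z0_def z1_def z2_def z3_def z4_def

lemma g1_g2_mem_S0: "g1 \<in> S0" "g2 \<in> S0"
  unfolding g1_def g2_def by (intro run_in_tsemigroup; auto simp: basic_events_def fits_def)+

lemma within_rows_z:
  "within_rows 4 z0" "within_rows 4 z1" "within_rows 4 z2" "within_rows 4 z3" "within_rows 4 z4"
  unfolding z_defs within_rows_def by auto

lemma g1_apply: "g1 z0 = z1" "g1 z1 = z2" "g1 z2 = z3" "g1 z3 = z4" "g1 z4 = z0"
  unfolding g1_def within_rows_z[THEN run_eq_run_exec] unfolding z_defs by code_simp+

lemma g2_apply: "g2 z0 = z3" "g2 z3 = z2" "g2 z2 = z0" "g2 z1 = z4" "g2 z4 = z1"
  unfolding g2_def within_rows_z[THEN run_eq_run_exec] unfolding z_defs by code_simp+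

lemma distinct_z: "distinct [z0, z1, z2, z3, z4]"
  unfolding z_defs by code_simp

lemma z_neq:
  "z0 \<noteq> z1" "z0 \<noteq> z2" "z0 \<noteq> z3" "z0 \<noteq> z4" "z1 \<noteq> z2"
  "z1 \<noteq> z3" "z1 \<noteq> z4" "z2 \<noteq> z3" "z2 \<noteq> z4" "z3 \<noteq> z4"
  using distinct_z by simp_all

lemma Z5_subset_reachable: "Z5 \<subseteq> X0"
proof -
  have "(g1 ^^ i) z0 \<in> X0" for i
    by (induction i) (auto simp: z0_def intro: reachable.empty tsemigroup_reachable g1_g2_mem_S0)
  from this[of 1] this[of 2] this[of 3] this[of 4] this[of 0] show ?thesis
    by (simp add: Z5_def numeral_eq_Suc g1_apply)
qed

lemma g1_image: "g1 ` Z5 = Z5"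
  by (auto simp: Z5_def g1_apply)

lemma g2_image: "g2 ` Z5 = Z5"
  by (auto simp: Z5_def g2_apply)

lemma induced_perms_Z5: "induced_perms Z5 S0 = {p. p permutes Z5}"
proof -
  interpret permutation_monoid Z5 "induced_perms Z5 S0"
    by (rule permutation_monoid_induced) (simp_all add: Z5_def tsemigroup_comp)
  have cycle: "induced Z5 g1 \<in> induced_perms Z5 S0"
    using g1_g2_mem_S0(1) g1_image by blast
  have "g2 \<circ> g2 \<circ> g2 \<in> S0"
    using g1_g2_mem_S0(2) by (intro tsemigroup_comp)
  moreover have "(g2 \<circ> g2 \<circ> g2) ` Z5 = Z5"
    using g2_image by (simp only: image_comp[symmetric])
  moreover have "induced Z5 (g2 \<circ> g2 \<circ> g2) = Transposition.transpose z4 z1"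
    by (auto simp: fun_eq_iff induced_def Transposition.transpose_def Z5_def g2_apply
        z_neq z_neq[symmetric])
  ultimately have swap: "Transposition.transpose z4 z1 \<in> induced_perms Z5 S0"
    by (metis (mono_tags, lifting) mem_Collect_eq)
  have all: "p \<in> induced_perms Z5 S0" if "p permutes Z5" for p
  proof (rule permutes_mem_if_five_cycle_transposition[of z4 z0 z1 z2 z3 "induced Z5 g1",
        OF _ _ cycle _ _ _ _ _ swap that])
    show "Z5 = {z4, z0, z1, z2, z3}" by (simp add: Z5_def insert_commute)
    show "distinct [z4, z0, z1, z2, z3]" by (simp add: z_neq z_neq[symmetric])
  qed (simp_all add: induced_def Z5_def g1_apply)
  show ?thesis
  proof (intro equalityI subsetI)
    show "p \<in> {p. p permutes Z5}" if "p \<in> induced_perms Z5 S0" for p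
      using mem_permutes[OF that] by simp
    show "p \<in> induced_perms Z5 S0" if "p \<in> {p. p permutes Z5}" for p
      using that all by (simp only: mem_Collect_eq)
  qed
qed

lemma g1_five_cycle:
  "\<exists>y0 y1 y2 y3 y4. distinct [y0, y1, y2, y3, y4] \<and> Z5 = {y0, y1, y2, y3, y4} \<and>
     g1 y0 = y1 \<and> g1 y1 = y2 \<and> g1 y2 = y3 \<and> g1 y3 = y4 \<and> g1 y4 = y0"
  by (rule exI[of _ z0], rule exI[of _ z1], rule exI[of _ z2], rule exI[of _ z3], rule exI[of _ z4])
    (simp add: z_neq Z5_def g1_apply)

lemma g2_three_cycle_transposition:
  "\<exists>a b c d f. distinct [a, b, c, d, f] \<and> Z5 = {a, b, c, d, f} \<and> a = {} \<and>
     g2 a = b \<and> g2 b = c \<and> g2 c = a \<and> g2 d = f \<and> g2 f = d"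
  by (rule exI[of _ z0], rule exI[of _ z3], rule exI[of _ z2], rule exI[of _ z1], rule exI[of _ z4])
    (simp add: Z5_def insert_commute g2_apply z_neq z_neq[symmetric] z0_def[symmetric])

theorem mainTheorem1:
  shows "\<exists>Z. Z \<subseteq> X0 \<and> card Z = 5 \<and> {} \<in> Z \<and>
    (\<exists>g1\<in>S0. \<exists>g2\<in>S0. g1 ` Z = Z \<and> g2 ` Z = Z \<and>
       (\<exists>z0 z1 z2 z3 z4. distinct [z0, z1, z2, z3, z4] \<and> Z = {z0, z1, z2, z3, z4} \<and>
          g1 z0 = z1 \<and> g1 z1 = z2 \<and> g1 z2 = z3 \<and> g1 z3 = z4 \<and> g1 z4 = z0) \<and>
       (\<exists>a b c d f. distinct [a, b, c, d, f] \<and> Z = {a, b, c, d, f} \<and> a = {} \<and>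
          g2 a = b \<and> g2 b = c \<and> g2 c = a \<and> g2 d = f \<and> g2 f = d)) \<and>
    {induced Z g | g. g \<in> S0 \<and> g ` Z = Z} = {p. p permutes Z} \<and>
    {p. p permutes Z \<and> evenperm p} \<subseteq> {induced Z g | g. g \<in> S0 \<and> g ` Z = Z}"
proof (rule exI[of _ Z5], intro conjI)
  show "Z5 \<subseteq> X0" by (fact Z5_subset_reachable)
  show "card Z5 = 5" using distinct_card[OF distinct_z] by (simp add: Z5_def)
  show "{} \<in> Z5" by (simp add: Z5_def z0_def)
  show "induced_perms Z5 S0 = {p. p permutes Z5}" by (fact induced_perms_Z5)
  then show "{p. p permutes Z5 \<and> evenperm p} \<subseteq> induced_perms Z5 S0" by blast
qed (rule bexI[OF _ g1_g2_mem_S0(1)], rule bexI[OF _ g1_g2_mem_S0(2)],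
    intro conjI g1_image g2_image g1_five_cycle g2_three_cycle_transposition)

end
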